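(* Let $\epsilon,\delta,\tau>0$ and set $r_{max}=\frac{\epsilon\delta}{m\tau}$. For any source supernode $\mathcal V_i\in\mathcal S$, the procedure GFP$(G,\mathcal S,\mathcal V_i,r_{max})$ terminates, and its output $\hat\pi_d(\mathcal V_i,\mathcal V_j)$ is an $(\epsilon,\delta)$-approximation of $\pi_d(\mathcal V_i,\mathcal V_j)$ for every $\mathcal V_j\in\mathcal S$ with $\tau_j\le\tau$.
   Context: $G=(V,E)$ is a directed graph with $n$ nodes and $m$ edges, no self-loops, and every node of out-degree $d(v)\ge1$; $\alpha\in(0,1)$. PPR $\pi(u,v)$: probability that a random walk from $u$ which at each step stops with probability $\alpha$ and otherwise moves to a uniformly random out-neighbor stops at $v$; $\pi_d(u,v)=d(u)\pi(u,v)$. A collection $\mathcal S=\{\mathcal V_1,\dots,\mathcal V_k\}$ of supernodes is given, each $\mathcal V_i$ having a nonempty leaf set $F(\mathcal V_i)\subseteq V$, the leaf sets being pairwise disjoint. For supernodes, $\pi_d(\mathcal V_i,\mathcal V_j)=\frac{1}{|F(\mathcal V_i)||F(\mathcal V_j)|}\sum_{v_s\in F(\mathcal V_i),v_t\in F(\mathcal V_j)}\pi_d(v_s,v_t)$. The degree-normalized PageRank of $\mathcal V_j$ is $\tau_j=\frac{1}{m|F(\mathcal V_j)|}\sum_{v_t\in F(\mathcal V_j)}\sum_{v_k\in V}\pi_d(v_k,v_t)$. A value $\hat x$ is an $(\epsilon,\delta)$-approximation of $x\ge0$ if $|\hat x-x|\le\epsilon\delta$ when $x<\delta$, and $|\hat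 x-x|\le\epsilon x$ when $x\ge\delta$. Procedure GFP$(G,\mathcal S,\mathcal V_i,r_{max})$: set $\hat\pi_d(\mathcal V_i,\mathcal V_j)=0$ for all $\mathcal V_j\in\mathcal S$; set $r(\mathcal V_i,v)=d(v)/|F(\mathcal V_i)|$ for $v\in F(\mathcal V_i)$ and $0$ otherwise. While some $v_k\in V$ has $r(\mathcal V_i,v_k)>d(v_k)\,r_{max}$, pick any such $v_k$ and: if $v_k\in F(\mathcal V_j)$ for some $\mathcal V_j\in\mathcal S$, add $\alpha\,r(\mathcal V_i,v_k)/|F(\mathcal V_j)|$ to $\hat\pi_d(\mathcal V_i,\mathcal V_j)$; for each out-neighbor $v_j$ of $v_k$ add $(1-\alpha)\,r(\mathcal V_i,v_k)/d(v_k)$ to $r(\mathcal V_i,v_j)$; then set $r(\mathcal V_i,v_k)=0$. Output the values $\hat\pi_d(\mathcal V_i,\cdot)$. *)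

theory Defs
  imports Complex_Main
begin

definition outN :: "('v \<times> 'v) set \<Rightarrow> 'v \<Rightarrow> 'v set" where
  "outN E u = {w. (u, w) \<in> E}"

definition deg :: "('v \<times> 'v) set \<Rightarrow> 'v \<Rightarrow> nat" where
  "deg E u = card (outN E u)"

definition graph_ok :: "'v set \<Rightarrow> ('v \<times> 'v) set \<Rightarrow> bool" where
  "graph_ok V E \<longleftrightarrow> finite V \<and> E \<subseteq> V \<times> V \<and> (\<forall>v. (v, v) \<notin> E)
     \<and> (\<forall>v\<in>V. deg E v \<ge> 1)"

fun walkprob :: "('v \<times> 'v) set \<Rightarrow> nat \<Rightarrow> 'v \<Rightarrow> 'v \<Rightarrow> real" where
  "walkprob E 0 u v = (if u = v then 1 else 0)"
| "walkprob E (Suc l) u v = (\<Sum>w\<in>outN E u. walkprob E l w v / real (deg E u))"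

text \<open>PPR: the walk stops after exactly l steps with probability alpha (1-alpha)^l.\<close>
definition ppr :: "('v \<times> 'v) set \<Rightarrow> real \<Rightarrow> 'v \<Rightarrow> 'v \<Rightarrow> real" where
  "ppr E \<alpha> u v = (\<Sum>l. \<alpha> * (1 - \<alpha>) ^ l * walkprob E l u v)"

definition ppr_d :: "('v \<times> 'v) set \<Rightarrow> real \<Rightarrow> 'v \<Rightarrow> 'v \<Rightarrow> real" where
  "ppr_d E \<alpha> u v = real (deg E u) * ppr E \<alpha> u v"

text \<open>Supernodes: index set S, leaf sets F.\<close>
definition supernodes_ok :: "'v set \<Rightarrow> 's set \<Rightarrow> ('s \<Rightarrow> 'v set) \<Rightarrow> bool" where
  "supernodes_ok V S F \<longleftrightarrow> finite S \<and> (\<forall>i\<in>S. F i \<noteq> {} \<and> F i \<subseteq> V)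
     \<and> (\<forall>i\<in>S. \<forall>j\<in>S. i \<noteq> j \<longrightarrow> F i \<inter> F j = {})"

definition ppr_d_super :: "('v \<times> 'v) set \<Rightarrow> real \<Rightarrow> ('s \<Rightarrow> 'v set) \<Rightarrow> 's \<Rightarrow> 's \<Rightarrow> real" where
  "ppr_d_super E \<alpha> F i j =
     (\<Sum>vs\<in>F i. \<Sum>vt\<in>F j. ppr_d E \<alpha> vs vt) / (real (card (F i)) * real (card (F j)))"

definition dpagerank :: "'v set \<Rightarrow> ('v \<times> 'v) set \<Rightarrow> real \<Rightarrow> ('s \<Rightarrow> 'v set) \<Rightarrow> 's \<Rightarrow> real" where
  "dpagerank V E \<alpha> F j =
     (\<Sum>vt\<in>F j. \<Sum>vk\<in>V. ppr_d E \<alpha> vk vt) / (real (card E) * real (card (F j)))"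

definition eps_delta_approx :: "real \<Rightarrow> real \<Rightarrow> real \<Rightarrow> real \<Rightarrow> bool" where
  "eps_delta_approx \<epsilon> \<delta> xh x \<longleftrightarrow>
     (x < \<delta> \<longrightarrow> \<bar>xh - x\<bar> \<le> \<epsilon> * \<delta>) \<and> (x \<ge> \<delta> \<longrightarrow> \<bar>xh - x\<bar> \<le> \<epsilon> * x)"

text \<open>GFP as a nondeterministic transition system on states (pihat, residue).\<close>
definition gfp_init :: "('v \<times> 'v) set \<Rightarrow> ('s \<Rightarrow> 'v set) \<Rightarrow> 's \<Rightarrow> ('s \<Rightarrow> real) \<times> ('v \<Rightarrow> real)" where
  "gfp_init E F i = ((\<lambda>_. 0), (\<lambda>v. if v \<in> F i then real (deg E v) / real (card (F i)) else 0))"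

definition gfp_step :: "'v set \<Rightarrow> ('v \<times> 'v) set \<Rightarrow> real \<Rightarrow> 's set \<Rightarrow> ('s \<Rightarrow> 'v set) \<Rightarrow> real
    \<Rightarrow> ('s \<Rightarrow> real) \<times> ('v \<Rightarrow> real) \<Rightarrow> ('s \<Rightarrow> real) \<times> ('v \<Rightarrow> real) \<Rightarrow> bool" where
  "gfp_step V E \<alpha> S F rmax st st' \<longleftrightarrow>
     (\<exists>vk\<in>V. snd st vk > real (deg E vk) * rmax \<and>
        st' = ((\<lambda>j. if j \<in> S \<and> vk \<in> F j
                     then fst st j + \<alpha> * snd st vk / real (card (F j)) else fst st j),
               (\<lambda>w. snd st w + (if w \<in> outN E vk
                                 then (1 - \<alpha>) * snd st vk / real (deg E vk) else 0))(vk := 0)))"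

end

theory Submission imports Defs begin

text \<open>Forward push maintains the invariant
  \<open>\<pi>_d(V_i, V_j) = \<pi>hat(V_i, V_j) + \<Sum>v. r(v) \<cdot> q_j(v)\<close>,
  where \<open>q_j(v)\<close> (\<open>leaf_ppr\<close>) is the PPR from \<open>v\<close> averaged over the leaves of \<open>V_j\<close>;
  a push at \<open>v_k\<close> preserves it because \<open>q_j\<close> satisfies the one-step recurrence of PPR.
  Each push removes the mass \<open>\<alpha> r(v_k) > \<alpha> r_max\<close> from the nonnegative total residue,
  so the procedure terminates. At termination \<open>r(v) \<le> d(v) r_max\<close>, hence the error
  \<open>\<Sum>v. r(v) q_j(v)\<close> is at most \<open>r_max \<Sum>v. d(v) q_j(v) = r_max m \<tau>_j \<le> \<epsilon>\<delta>\<close>.\<close>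

lemma outN_subset: "graph_ok V E \<Longrightarrow> outN E u \<subseteq> V"
  unfolding graph_ok_def outN_def by auto

lemma walkprob_bounds:
  assumes "graph_ok V E"
  shows "0 \<le> walkprob E l u v \<and> walkprob E l u v \<le> 1"
proof (induction l arbitrary: u)
  case 0
  show ?case by simp
next
  case (Suc l)
  have "(\<Sum>w\<in>outN E u. walkprob E l w v / real (deg E u)) \<le> (\<Sum>w\<in>outN E u. 1 / real (deg E u))"
    by (rule sum_mono, rule divide_right_mono) (use Suc.IH in auto)
  also have "\<dots> \<le> 1" by (simp add: deg_def)
  finally show ?case
    using Suc.IH by (auto intro!: sum_nonneg divide_nonneg_nonneg)
qed

lemma summable_ppr:
  assumes "graph_ok V E" "0 < \<alpha>" "\<alpha> < 1"
  shows "summable (\<lambda>l. \<alpha> * (1 - \<alpha>) ^ l * walkprob E l u v)"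
proof (rule summable_comparison_test'[where g = "\<lambda>l. \<alpha> * (1 - \<alpha>) ^ l" and N = 0])
  show "summable (\<lambda>l. \<alpha> * (1 - \<alpha>) ^ l)"
    using assms by (intro summable_mult summable_geometric) auto
  fix n
  have "0 \<le> walkprob E n u v" "walkprob E n u v \<le> 1" "0 \<le> \<alpha> * (1 - \<alpha>) ^ n"
    using walkprob_bounds[OF assms(1)] assms(2,3) by auto
  then show "norm (\<alpha> * (1 - \<alpha>) ^ n * walkprob E n u v) \<le> \<alpha> * (1 - \<alpha>) ^ n"
    by (simp add: mult_left_le)
qed

lemma ppr_nonneg:
  assumes "graph_ok V E" "0 < \<alpha>" "\<alpha> < 1"
  shows "0 \<le> ppr E \<alpha> u v"
  unfolding ppr_def using summable_ppr[OF assms] walkprob_bounds[OF assms(1)] assms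
  by (intro suminf_nonneg) auto

lemma ppr_unfold:
  assumes "graph_ok V E" "0 < \<alpha>" "\<alpha> < 1"
  shows "ppr E \<alpha> u v = \<alpha> * (if u = v then 1 else 0)
      + (1 - \<alpha>) / real (deg E u) * (\<Sum>w\<in>outN E u. ppr E \<alpha> w v)"
proof -
  define f where "f l = \<alpha> * (1 - \<alpha>) ^ l * walkprob E l u v" for l
  have head: "ppr E \<alpha> u v = f 0 + (\<Sum>n. f (Suc n))"
    using suminf_split_head[OF summable_ppr[OF assms]] by (simp add: ppr_def f_def)
  have "f (Suc n) = (1 - \<alpha>) / real (deg E u) *
      (\<Sum>w\<in>outN E u. \<alpha> * (1 - \<alpha>) ^ n * walkprob E n w v)" for n
    by (simp add: f_def sum_distrib_left sum_divide_distrib mult_ac)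
  moreover have "(\<Sum>n. \<Sum>w\<in>outN E u. \<alpha> * (1 - \<alpha>) ^ n * walkprob E n w v)
      = (\<Sum>w\<in>outN E u. ppr E \<alpha> w v)"
    unfolding ppr_def by (rule suminf_sum) (rule summable_ppr[OF assms])
  ultimately have "(\<Sum>n. f (Suc n)) = (1 - \<alpha>) / real (deg E u) * (\<Sum>w\<in>outN E u. ppr E \<alpha> w v)"
    by (simp only:) (subst suminf_mult, auto intro!: summable_sum summable_ppr[OF assms])
  then show ?thesis using head by (simp add: f_def)
qed

definition leaf_ppr :: "('v \<times> 'v) set \<Rightarrow> real \<Rightarrow> ('s \<Rightarrow> 'v set) \<Rightarrow> 's \<Rightarrow> 'v \<Rightarrow> real" where
  "leaf_ppr E \<alpha> F j v = (\<Sum>t\<in>F j. ppr E \<alpha> v t) / real (card (F j))"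

lemma leaf_ppr_nonneg:
  assumes "graph_ok V E" "0 < \<alpha>" "\<alpha> < 1"
  shows "0 \<le> leaf_ppr E \<alpha> F j v"
  unfolding leaf_ppr_def using ppr_nonneg[OF assms] by (auto intro!: sum_nonneg divide_nonneg_nonneg)

lemma leaf_ppr_unfold:
  assumes "graph_ok V E" "0 < \<alpha>" "\<alpha> < 1" "finite (F j)"
  shows "leaf_ppr E \<alpha> F j u = \<alpha> * (if u \<in> F j then 1 else 0) / real (card (F j))
     + (1 - \<alpha>) / real (deg E u) * (\<Sum>w\<in>outN E u. leaf_ppr E \<alpha> F j w)"
proof -
  have "(\<Sum>t\<in>F j. ppr E \<alpha> u t) = (\<Sum>t\<in>F j. \<alpha> * (if u = t then 1 else 0)
      + (1 - \<alpha>) / real (deg E u) * (\<Sum>w\<in>outN E u. ppr E \<alpha> w t))"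
    by (rule sum.cong[OF refl], rule ppr_unfold[OF assms(1-3)])
  also have "\<dots> = \<alpha> * (if u \<in> F j then 1 else 0)
      + (1 - \<alpha>) / real (deg E u) * (\<Sum>w\<in>outN E u. \<Sum>t\<in>F j. ppr E \<alpha> w t)"
    using assms(4)
    by (simp add: sum.distrib sum_divide_distrib[symmetric] sum_distrib_left[symmetric]
        sum.swap[of _ "F j"])
  finally show ?thesis unfolding leaf_ppr_def
    by (simp add: sum_divide_distrib[symmetric] add_divide_distrib)
qed

lemma degree_weighted_leaf_ppr:
  assumes "card E \<noteq> 0"
  shows "(\<Sum>v\<in>V. real (deg E v) * leaf_ppr E \<alpha> F j v) = real (card E) * dpagerank V E \<alpha> F j"
proof -
  have "(\<Sum>v\<in>V. real (deg E v) * leaf_ppr E \<alpha> F j v)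
      = (\<Sum>v\<in>V. \<Sum>t\<in>F j. ppr_d E \<alpha> v t) / real (card (F j))"
    unfolding leaf_ppr_def ppr_d_def sum_divide_distrib
    by (rule sum.cong) (simp_all add: sum_distrib_left)
  also have "\<dots> = real (card E) * dpagerank V E \<alpha> F j"
    unfolding dpagerank_def using assms by (simp add: sum.swap[of _ V])
  finally show ?thesis .
qed

lemma sum_push_update:
  fixes r g :: "'v \<Rightarrow> real"
  assumes "finite V" "vk \<in> V" "U \<subseteq> V" "vk \<notin> U"
  shows "(\<Sum>w\<in>V. ((\<lambda>w. r w + (if w \<in> U then c else 0))(vk := 0)) w * g w)
       = (\<Sum>w\<in>V. r w * g w) - r vk * g vk + c * (\<Sum>w\<in>U. g w)"
proof -
  have "((\<lambda>w. r w + (if w \<in> U then c else 0))(vk := 0)) w * g w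
      = r w * g w - (if w = vk then r vk * g vk else 0) + (if w \<in> U then c * g w else 0)" for w
    using assms(4) by (auto simp: algebra_simps)
  moreover have "(\<Sum>w\<in>V. if w \<in> U then c * g w else 0) = c * (\<Sum>w\<in>U. g w)"
    using assms(1,3) by (simp add: sum.inter_restrict[symmetric] Int_absorb1 sum_distrib_left)
  ultimately show ?thesis
    using assms(1,2) by (simp add: sum.distrib sum_subtractf)
qed

definition gfp_invariant :: "'v set \<Rightarrow> ('v \<times> 'v) set \<Rightarrow> real \<Rightarrow> 's set \<Rightarrow> ('s \<Rightarrow> 'v set) \<Rightarrow> 's
   \<Rightarrow> ('s \<Rightarrow> real) \<times> ('v \<Rightarrow> real) \<Rightarrow> bool" where
  "gfp_invariant V E \<alpha> S F i st \<longleftrightarrow> (\<forall>v. 0 \<le> snd st v) \<and>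
     (\<forall>j\<in>S. ppr_d_super E \<alpha> F i j = fst st j + (\<Sum>v\<in>V. snd st v * leaf_ppr E \<alpha> F j v))"

lemma gfp_invariant_init:
  assumes G: "graph_ok V E" and SN: "supernodes_ok V S F" and i: "i \<in> S"
  shows "gfp_invariant V E \<alpha> S F i (gfp_init E F i)"
proof -
  have finV: "finite V" using G unfolding graph_ok_def by blast
  have FiV: "F i \<subseteq> V" using SN i unfolding supernodes_ok_def by blast
  have "(\<Sum>v\<in>V. snd (gfp_init E F i) v * leaf_ppr E \<alpha> F j v)
      = (\<Sum>v\<in>F i. real (deg E v) / real (card (F i)) * leaf_ppr E \<alpha> F j v)" for j
  proof -
    have "(\<Sum>v\<in>V. snd (gfp_init E F i) v * leaf_ppr E \<alpha> F j v)
        = (\<Sum>v\<in>V. if v \<in> F i then real (deg E v) / real (card (F i)) * leaf_ppr E \<alpha> F j v else 0)"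
      by (rule sum.cong) (simp_all add: gfp_init_def)
    also have "\<dots> = (\<Sum>v\<in>V \<inter> F i. real (deg E v) / real (card (F i)) * leaf_ppr E \<alpha> F j v)"
      by (rule sum.inter_restrict[OF finV, symmetric])
    finally show ?thesis using FiV by (simp add: Int_absorb1)
  qed
  moreover have "ppr_d_super E \<alpha> F i j
      = (\<Sum>v\<in>F i. real (deg E v) / real (card (F i)) * leaf_ppr E \<alpha> F j v)" for j
    unfolding ppr_d_super_def ppr_d_def leaf_ppr_def sum_divide_distrib
    by (rule sum.cong) (simp_all add: sum_distrib_left)
  ultimately show ?thesis
    unfolding gfp_invariant_def by (auto simp: gfp_init_def)
qed

lemma gfp_stepE:
  assumes "gfp_step V E \<alpha> S F rmax st st'"
  obtains vk where "vk \<in> V" "snd st vk > real (deg E vk) * rmax"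
    "\<And>j. fst st' j = (if j \<in> S \<and> vk \<in> F j
        then fst st j + \<alpha> * snd st vk / real (card (F j)) else fst st j)"
    "snd st' = (\<lambda>w. snd st w + (if w \<in> outN E vk
        then (1 - \<alpha>) * snd st vk / real (deg E vk) else 0))(vk := 0)"
  using assms unfolding gfp_step_def by (elim bexE conjE) (auto intro: that)

lemma gfp_step_residue_sum:
  assumes G: "graph_ok V E" and step: "gfp_step V E \<alpha> S F rmax st st'"
  obtains vk where "vk \<in> V" "snd st vk > real (deg E vk) * rmax"
    "(\<Sum>v\<in>V. snd st' v) = (\<Sum>v\<in>V. snd st v) - \<alpha> * snd st vk"
proof -
  obtain vk where vk: "vk \<in> V" "snd st vk > real (deg E vk) * rmax"
    and res: "snd st' = (\<lambda>w. snd st w + (if w \<in> outN E vk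
        then (1 - \<alpha>) * snd st vk / real (deg E vk) else 0))(vk := 0)"
    using step by (rule gfp_stepE)
  have "finite V" "vk \<notin> outN E vk" "deg E vk \<ge> 1"
    using G vk(1) unfolding graph_ok_def outN_def by auto
  then have "(\<Sum>v\<in>V. snd st' v) = (\<Sum>v\<in>V. snd st v) - snd st vk + (1 - \<alpha>) * snd st vk"
    using sum_push_update[OF _ vk(1) outN_subset[OF G], where g = "\<lambda>_. 1"] res
    by (simp add: deg_def)
  then show thesis using that vk by (simp add: algebra_simps)
qed

lemma gfp_step_invariant:
  assumes G: "graph_ok V E" and SN: "supernodes_ok V S F" and a: "0 < \<alpha>" "\<alpha> < 1"
    and step: "gfp_step V E \<alpha> S F rmax st st'" and I: "gfp_invariant V E \<alpha> S F i st"
  shows "gfp_invariant V E \<alpha> S F i st'"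
proof -
  obtain vk where vk: "vk \<in> V"
    and est: "\<And>j. fst st' j = (if j \<in> S \<and> vk \<in> F j
        then fst st j + \<alpha> * snd st vk / real (card (F j)) else fst st j)"
    and res: "snd st' = (\<lambda>w. snd st w + (if w \<in> outN E vk
        then (1 - \<alpha>) * snd st vk / real (deg E vk) else 0))(vk := 0)"
    using step by (rule gfp_stepE) blast
  have finV: "finite V" and vk_out: "vk \<notin> outN E vk"
    using G unfolding graph_ok_def outN_def by auto
  have res_nonneg: "\<forall>v. 0 \<le> snd st v" using I unfolding gfp_invariant_def by blast
  with a have "\<forall>v. 0 \<le> snd st' v" unfolding res by simp
  moreover have "ppr_d_super E \<alpha> F i j = fst st' j + (\<Sum>v\<in>V. snd st' v * leaf_ppr E \<alpha> F j v)"
    if j: "j \<in> S" for j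
  proof -
    have "finite (F j)" using SN j finV unfolding supernodes_ok_def by (meson finite_subset)
    note unfold = leaf_ppr_unfold[where F = F and j = j and u = vk, OF G a this]
    have old: "ppr_d_super E \<alpha> F i j = fst st j + (\<Sum>v\<in>V. snd st v * leaf_ppr E \<alpha> F j v)"
      using I j unfolding gfp_invariant_def by blast
    show ?thesis
      unfolding res sum_push_update[OF finV vk outN_subset[OF G] vk_out] est old unfold
      using j by (simp add: algebra_simps)
  qed
  ultimately show ?thesis unfolding gfp_invariant_def by blast
qed

lemma gfp_reachable_invariant:
  assumes "graph_ok V E" "supernodes_ok V S F" "0 < \<alpha>" "\<alpha> < 1" "i \<in> S"
    and "(gfp_step V E \<alpha> S F rmax)\<^sup>*\<^sup>* (gfp_init E F i) st"
  shows "gfp_invariant V E \<alpha> S F i st"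
  using assms(6)
  by (induction rule: rtranclp_induct)
    (auto intro: gfp_invariant_init[OF assms(1,2,5)] gfp_step_invariant[OF assms(1-4)])

lemma gfp_terminates:
  assumes G: "graph_ok V E" and SN: "supernodes_ok V S F" and a: "0 < \<alpha>" "\<alpha> < 1"
    and i: "i \<in> S" and rmax: "0 < rmax"
  shows "\<not> (\<exists>f. f 0 = gfp_init E F i \<and> (\<forall>n. gfp_step V E \<alpha> S F rmax (f n) (f (Suc n))))"
proof
  assume "\<exists>f. f 0 = gfp_init E F i \<and> (\<forall>n. gfp_step V E \<alpha> S F rmax (f n) (f (Suc n)))"
  then obtain f where f0: "f 0 = gfp_init E F i"
    and run: "\<And>n. gfp_step V E \<alpha> S F rmax (f n) (f (Suc n))" by blast
  define R where "R n = (\<Sum>v\<in>V. snd (f n) v)" for n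
  have "(gfp_step V E \<alpha> S F rmax)\<^sup>*\<^sup>* (gfp_init E F i) (f n)" for n
    by (induction n) (auto simp: f0 intro: rtranclp.rtrancl_into_rtrancl run)
  then have "gfp_invariant V E \<alpha> S F i (f n)" for n
    by (rule gfp_reachable_invariant[OF G SN a i])
  then have R_nonneg: "0 \<le> R n" for n
    unfolding R_def gfp_invariant_def by (auto intro: sum_nonneg)
  have R_decrease: "R n \<le> R 0 - real n * (\<alpha> * rmax)" for n
  proof (induction n)
    case (Suc n)
    obtain vk where vk: "vk \<in> V" "snd (f n) vk > real (deg E vk) * rmax"
      "R (Suc n) = R n - \<alpha> * snd (f n) vk"
      using gfp_step_residue_sum[OF G run[of n]] unfolding R_def by blast
    have "deg E vk \<ge> 1" using G vk(1) unfolding graph_ok_def by blast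
    then have "rmax \<le> real (deg E vk) * rmax" using rmax by simp
    then have "\<alpha> * rmax \<le> \<alpha> * snd (f n) vk" using vk(2) a by simp
    then show ?case using vk(3) Suc.IH by (simp add: algebra_simps)
  qed simp
  obtain n :: nat where "real n > R 0 / (\<alpha> * rmax)" using reals_Archimedean2 by blast
  then have "real n * (\<alpha> * rmax) > R 0" using a rmax by (simp add: field_simps)
  then show False using R_decrease[of n] R_nonneg[of n] by simp
qed

lemma gfp_final_residue_small:
  assumes "v \<in> V" and "\<not> (\<exists>st'. gfp_step V E \<alpha> S F rmax st st')"
  shows "snd st v \<le> real (deg E v) * rmax"
  using assms unfolding gfp_step_def by (meson not_le)

lemma gfp_final_error:
  assumes G: "graph_ok V E" and a: "0 < \<alpha>" "\<alpha> < 1" and m: "card E \<noteq> 0"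
    and I: "gfp_invariant V E \<alpha> S F i st" and j: "j \<in> S"
    and small: "\<And>v. v \<in> V \<Longrightarrow> snd st v \<le> real (deg E v) * rmax"
  shows "fst st j \<le> ppr_d_super E \<alpha> F i j"
    and "ppr_d_super E \<alpha> F i j - fst st j \<le> rmax * real (card E) * dpagerank V E \<alpha> F j"
proof -
  have err: "ppr_d_super E \<alpha> F i j - fst st j = (\<Sum>v\<in>V. snd st v * leaf_ppr E \<alpha> F j v)"
    using I j unfolding gfp_invariant_def by simp
  have q: "\<And>v. 0 \<le> leaf_ppr E \<alpha> F j v" by (rule leaf_ppr_nonneg[OF G a])
  have "0 \<le> (\<Sum>v\<in>V. snd st v * leaf_ppr E \<alpha> F j v)"
    using I q unfolding gfp_invariant_def by (auto intro!: sum_nonneg)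
  then show "fst st j \<le> ppr_d_super E \<alpha> F i j" using err by simp
  have "(\<Sum>v\<in>V. snd st v * leaf_ppr E \<alpha> F j v)
      \<le> (\<Sum>v\<in>V. real (deg E v) * rmax * leaf_ppr E \<alpha> F j v)"
    by (rule sum_mono) (use small q in \<open>auto intro: mult_right_mono\<close>)
  also have "\<dots> = rmax * real (card E) * dpagerank V E \<alpha> F j"
    using degree_weighted_leaf_ppr[OF m, where V = V and \<alpha> = \<alpha> and F = F and j = j]
    by (simp add: sum_distrib_left[symmetric] mult_ac)
  finally show "ppr_d_super E \<alpha> F i j - fst st j \<le> rmax * real (card E) * dpagerank V E \<alpha> F j"
    using err by simp
qed

lemma eps_delta_approx_of_abs_le:
  assumes "\<bar>xh - x\<bar> \<le> \<epsilon> * \<delta>" "0 \<le> \<epsilon>"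
  shows "eps_delta_approx \<epsilon> \<delta> xh x"
  using assms mult_left_mono[of \<delta> x \<epsilon>] unfolding eps_delta_approx_def by auto

theorem lemma2:
  fixes V :: "'v set" and E :: "('v \<times> 'v) set" and S :: "'s set" and F :: "'s \<Rightarrow> 'v set"
    and \<alpha> \<epsilon> \<delta> \<tau> rmax :: real and i :: 's
  assumes "graph_ok V E"
    and "supernodes_ok V S F"
    and "0 < \<alpha>" and "\<alpha> < 1"
    and "0 < \<epsilon>" and "0 < \<delta>" and "0 < \<tau>"
    and "rmax = \<epsilon> * \<delta> / (real (card E) * \<tau>)"
    and "i \<in> S"
  shows "\<not> (\<exists>f. f 0 = gfp_init E F i \<and> (\<forall>n. gfp_step V E \<alpha> S F rmax (f n) (f (Suc n))))
    \<and> (\<forall>st. (gfp_step V E \<alpha> S F rmax)\<^sup>*\<^sup>* (gfp_init E F i) st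
            \<and> \<not> (\<exists>st'. gfp_step V E \<alpha> S F rmax st st') \<longrightarrow>
          (\<forall>j\<in>S. dpagerank V E \<alpha> F j \<le> \<tau> \<longrightarrow>
             eps_delta_approx \<epsilon> \<delta> (fst st j) (ppr_d_super E \<alpha> F i j)))"
proof -
  note G = assms(1) and SN = assms(2) and a = assms(3,4)
  obtain v0 where "v0 \<in> V" using SN assms(9) unfolding supernodes_ok_def by blast
  with G have "E \<noteq> {}" "finite E"
    unfolding graph_ok_def deg_def outN_def by (auto intro: finite_subset)
  then have m: "real (card E) > 0" by (simp add: card_gt_0_iff)
  then have rmax: "rmax > 0" using assms(5-8) by simp
  have "eps_delta_approx \<epsilon> \<delta> (fst st j) (ppr_d_super E \<alpha> F i j)"
    if reach: "(gfp_step V E \<alpha> S F rmax)\<^sup>*\<^sup>* (gfp_init E F i) st"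
      and final: "\<not> (\<exists>st'. gfp_step V E \<alpha> S F rmax st st')"
      and j: "j \<in> S" and tau: "dpagerank V E \<alpha> F j \<le> \<tau>" for st j
  proof -
    note bounds = gfp_final_error[OF G a _ gfp_reachable_invariant[OF G SN a assms(9) reach] j
        gfp_final_residue_small[OF _ final]]
    have "rmax * real (card E) * dpagerank V E \<alpha> F j \<le> rmax * real (card E) * \<tau>"
      using tau rmax m by simp
    also have "\<dots> = \<epsilon> * \<delta>" using assms(7,8) m by simp
    finally show ?thesis
      using bounds m rmax assms(5) by (intro eps_delta_approx_of_abs_le) auto
  qed
  then show ?thesis using gfp_terminates[OF G SN a assms(9) rmax] by blast
qed

end
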